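(* Let $\Lambda=\Lambda(V^* )$, $V=\mathbb{C}^n$, and $W=\mathrm{der}(\Lambda)$ carry the gradings of type $\vec k=(k_1,\dots,k_m)$, with depths $d(\Lambda)$ and $d(W)$. (i) The grading of $\Lambda$ has depth $d(\Lambda)=1$ if and only if $\vec k=(-1,k_2,\dots,k_m)$ and $\dim U^{-1}=1$; in this case $d(W)=k_m+1$. (ii) The grading of $\Lambda$ has depth $d(\Lambda)=0$ if and only if $k_1\ge 0$. Moreover, when $d(\Lambda)=0$: $d(W)=0$ if and only if $\vec k=(0)$, and $d(W)=1$ if and only if $\vec k=(0,1)$ or $\vec k=(1)$.
   Context: Grading of type $\vec k$: a decomposition $U=V^*=U^{k_1}\oplus\cdots\oplus U^{k_m}$ with integers $k_1<\cdots<k_m$ and $n_i=\dim U^{k_i}>0$ induces $V^{-k_i}=(U^{k_i})^*$, the grading $\Lambda^p=\bigoplus_{p_1k_1+\cdots+p_mk_m=p}\Lambda^{p_1}(U^{k_1})\cdots\Lambda^{p_m}(U^{k_m})$ of $\Lambda$ (where $\Lambda^{p_i}(U^{k_i})$ denotes exterior forms of polynomial degree $p_i$ on $U^{k_i}$), and the grading $W^q=\bigoplus_{p-k_i=q}\Lambda^p\partial_{V^{-k_i}}$ of $W=\Lambda\otimes\partial_V$. A graded space $A=\bigoplus A^p$ has depth $d$ if $A^{-d}\neq0$ and $A^{p}=0$ for all $p<-d$. *)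

theory Defs
  imports Main
begin

text \<open>A grading of type ks = [k_1,...,k_m] of U = V^* is encoded by the list ks of
  degrees (strictly increasing) and the list ns of dimensions n_i = dim U^{k_i} > 0.
  The graded spaces are encoded by their dimension functions (degree \<Rightarrow> dimension).\<close>

definition valid_grading :: "int list \<Rightarrow> nat list \<Rightarrow> bool" where
  "valid_grading ks ns \<longleftrightarrow> ks \<noteq> [] \<and> length ns = length ks \<and>
     sorted_wrt (<) ks \<and> (\<forall>i<length ns. ns ! i > 0)"

definition exps :: "nat list \<Rightarrow> nat list set" where
  "exps ns = {ps. length ps = length ns \<and> (\<forall>i<length ns. ps ! i \<le> ns ! i)}"

definition wdeg :: "int list \<Rightarrow> nat list \<Rightarrow> int" where
  "wdeg ks ps = (\<Sum>i<length ks. int (ps ! i) * ks ! i)"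

text \<open>dim \<Lambda>^p = sum over p_1 k_1 + ... + p_m k_m = p of prod_i dim \<Lambda>^{p_i}(U^{k_i}).\<close>
definition dimLam :: "int list \<Rightarrow> nat list \<Rightarrow> int \<Rightarrow> nat" where
  "dimLam ks ns p = (\<Sum>ps\<in>{ps \<in> exps ns. wdeg ks ps = p}. \<Prod>i<length ns. (ns ! i) choose (ps ! i))"

text \<open>dim W^q = sum_i dim \<Lambda>^{q+k_i} * dim V^{-k_i}, with dim V^{-k_i} = n_i.\<close>
definition dimW :: "int list \<Rightarrow> nat list \<Rightarrow> int \<Rightarrow> nat" where
  "dimW ks ns q = (\<Sum>i<length ks. dimLam ks ns (q + ks ! i) * ns ! i)"

definition has_depth :: "(int \<Rightarrow> nat) \<Rightarrow> int \<Rightarrow> bool" where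
  "has_depth A d \<longleftrightarrow> A (- d) \<noteq> 0 \<and> (\<forall>p < - d. A p = 0)"

end

theory Submission
  imports Defs
begin

(* Lambda^p is nonzero exactly when p is a weighted degree p_1 k_1 + ... + p_m k_m with
   0 <= p_i <= n_i. The least such degree takes p_i = n_i for k_i < 0 and p_i = 0 otherwise,
   so d(Lambda) is the sum of n_i |k_i| over the negative k_i. As W^q is nonzero iff some
   Lambda^(q + k_i) is, the lowest degree of W is attained at the largest k_m, so
   d(W) = d(Lambda) + k_m. What remains is arithmetic: d(Lambda) = 0 iff k_1 >= 0,
   d(Lambda) = 1 iff k_1 = -1 and n_1 = 1 (all later k_i are then nonnegative), and a
   strictly increasing list of nonnegative integers ending in 0 or 1 is (0), (1) or (0, 1). *)

lemma finite_exps: "finite (exps ns)"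
proof (rule finite_subset)
  show "exps ns \<subseteq> {ps. set ps \<subseteq> {..sum_list ns} \<and> length ps = length ns}"
    by (auto simp: exps_def in_set_conv_nth) (meson elem_le_sum_list order.trans)
  show "finite {ps. set ps \<subseteq> {..sum_list ns} \<and> length ps = length ns}"
    by (simp add: finite_lists_length_eq)
qed

lemma dimLam_neq_0_iff: "dimLam ks ns p \<noteq> 0 \<longleftrightarrow> p \<in> wdeg ks ` exps ns"
proof -
  have "(\<Prod>i<length ns. ns ! i choose ps ! i) \<noteq> 0" if "ps \<in> exps ns" for ps
    using that by (auto simp: exps_def)
  then show ?thesis
    by (auto simp: dimLam_def sum_eq_0_iff finite_exps)
qed

lemma has_depth_iff:
  assumes "A m \<noteq> 0" and "\<And>p. p < m \<Longrightarrow> A p = 0"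
  shows "has_depth A d \<longleftrightarrow> d = - m"
  using assms unfolding has_depth_def by (metis minus_minus linorder_neqE)

definition min_wdeg :: "int list \<Rightarrow> nat list \<Rightarrow> int" where
  "min_wdeg ks ns = (\<Sum>i<length ks. int (ns ! i) * min 0 (ks ! i))"

lemma min_wdeg_le_wdeg:
  assumes "length ns = length ks" and "ps \<in> exps ns"
  shows "min_wdeg ks ns \<le> wdeg ks ps"
  unfolding min_wdeg_def wdeg_def
proof (rule sum_mono)
  fix i assume "i \<in> {..<length ks}"
  then have "int (ps ! i) \<le> int (ns ! i)"
    using assms by (auto simp: exps_def)
  then show "int (ns ! i) * min 0 (ks ! i) \<le> int (ps ! i) * ks ! i"
    by (cases "ks ! i < 0") (auto intro: mult_right_mono_neg)
qed

lemma min_wdeg_attained: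
  assumes "length ns = length ks"
  shows "min_wdeg ks ns \<in> wdeg ks ` exps ns"
proof
  let ?ps = "map (\<lambda>i. if ks ! i < 0 then ns ! i else 0) [0..<length ns]"
  show "?ps \<in> exps ns"
    by (simp add: exps_def)
  show "min_wdeg ks ns = wdeg ks ?ps"
    unfolding min_wdeg_def wdeg_def using assms by (intro sum.cong) auto
qed

lemma dimLam_eq_0_below_min_wdeg:
  assumes "length ns = length ks" and "p < min_wdeg ks ns"
  shows "dimLam ks ns p = 0"
  by (metis assms dimLam_neq_0_iff imageE min_wdeg_le_wdeg not_le)

lemma has_depth_dimLam_iff:
  assumes "length ns = length ks"
  shows "has_depth (dimLam ks ns) d \<longleftrightarrow> d = - min_wdeg ks ns"
proof (rule has_depth_iff)
  show "dimLam ks ns (min_wdeg ks ns) \<noteq> 0"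
    using assms by (simp only: dimLam_neq_0_iff min_wdeg_attained)
  show "dimLam ks ns p = 0" if "p < min_wdeg ks ns" for p
    using assms that by (rule dimLam_eq_0_below_min_wdeg)
qed

lemma dimW_neq_0_iff:
  assumes "length ns = length ks" and "\<forall>i<length ns. 0 < ns ! i"
  shows "dimW ks ns q \<noteq> 0 \<longleftrightarrow> (\<exists>i<length ks. dimLam ks ns (q + ks ! i) \<noteq> 0)"
  using assms by (auto simp: dimW_def)

lemma sorted_le_last: "sorted xs \<Longrightarrow> x \<in> set xs \<Longrightarrow> x \<le> last xs"
  by (induction xs) (auto simp: last_in_set)

lemma has_depth_dimW_iff:
  assumes "valid_grading ks ns"
  shows "has_depth (dimW ks ns) d \<longleftrightarrow> d = last ks - min_wdeg ks ns"
proof -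
  have len: "length ns = length ks" and pos: "\<forall>i<length ns. 0 < ns ! i"
    and "ks \<noteq> []" and "sorted ks"
    using assms by (auto simp: valid_grading_def strict_sorted_imp_sorted)
  then have le_last: "k \<le> last ks" if "k \<in> set ks" for k
    using that by (simp add: sorted_le_last)
  have "has_depth (dimW ks ns) d \<longleftrightarrow> d = - (min_wdeg ks ns - last ks)"
  proof (rule has_depth_iff)
    let ?j = "length ks - 1"
    have "?j < length ks" and "ks ! ?j = last ks"
      using \<open>ks \<noteq> []\<close> by (auto simp: last_conv_nth)
    moreover have "dimLam ks ns (min_wdeg ks ns - last ks + last ks) \<noteq> 0"
      using len by (simp only: diff_add_cancel dimLam_neq_0_iff min_wdeg_attained)
    ultimately show "dimW ks ns (min_wdeg ks ns - last ks) \<noteq> 0"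
      unfolding dimW_neq_0_iff[OF len pos] by metis
    fix p assume "p < min_wdeg ks ns - last ks"
    have below: "dimLam ks ns (p + ks ! i) = 0" if "i < length ks" for i
      using \<open>p < min_wdeg ks ns - last ks\<close> le_last[OF nth_mem[OF that]] len
      by (intro dimLam_eq_0_below_min_wdeg) auto
    show "dimW ks ns p = 0"
      by (simp add: dimW_def below)
  qed
  then show ?thesis by simp
qed

lemma min_wdeg_Cons: "min_wdeg (k # ks) (n # ns) = int n * min 0 k + min_wdeg ks ns"
  unfolding min_wdeg_def length_Cons sum.lessThan_Suc_shift by simp

lemma min_wdeg_nonpos: "min_wdeg ks ns \<le> 0"
  unfolding min_wdeg_def by (intro sum_nonpos) (simp add: mult_nonneg_nonpos)

lemma min_wdeg_eq_0: "\<forall>k\<in>set ks. 0 \<le> k \<Longrightarrow> min_wdeg ks ns = 0"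
  unfolding min_wdeg_def by (intro sum.neutral) auto

lemma valid_gradingE:
  assumes "valid_grading ks ns"
  obtains k ks' n ns' where "ks = k # ks'" and "ns = n # ns'" and "0 < n"
    and "\<forall>k'\<in>set ks'. k < k'"
  using assms unfolding valid_grading_def
  by (cases ks; cases ns) auto

lemma min_wdeg_le_head:
  assumes "valid_grading ks ns"
  shows "min_wdeg ks ns \<le> int (ns ! 0) * min 0 (ks ! 0)"
  using assms min_wdeg_nonpos
  by (elim valid_gradingE) (simp add: min_wdeg_Cons)

lemma min_wdeg_eq_head:
  assumes "valid_grading ks ns" and "-1 \<le> ks ! 0"
  shows "min_wdeg ks ns = int (ns ! 0) * min 0 (ks ! 0)"
proof -
  obtain k ks' n ns' where ks: "ks = k # ks'" and ns: "ns = n # ns'"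
    and tail: "\<forall>k'\<in>set ks'. k < k'"
    using assms(1) by (elim valid_gradingE)
  have "\<forall>k'\<in>set ks'. 0 \<le> k'"
    using tail assms(2) ks by force
  then show ?thesis
    by (simp add: ks ns min_wdeg_Cons min_wdeg_eq_0)
qed

lemma min_wdeg_eq_0_iff:
  assumes "valid_grading ks ns"
  shows "min_wdeg ks ns = 0 \<longleftrightarrow> 0 \<le> ks ! 0"
proof (cases "0 \<le> ks ! 0")
  case True
  then show ?thesis using min_wdeg_eq_head[OF assms] by simp
next
  case False
  have "0 < ns ! 0"
    using assms by (elim valid_gradingE) simp
  then have "int (ns ! 0) * min 0 (ks ! 0) < 0"
    using False by (simp add: mult_pos_neg)
  then show ?thesis
    using False min_wdeg_le_head[OF assms] by simp
qed

lemma min_wdeg_eq_neg1_iff: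
  assumes "valid_grading ks ns"
  shows "min_wdeg ks ns = -1 \<longleftrightarrow> ks ! 0 = -1 \<and> ns ! 0 = 1"
proof (cases "-1 \<le> ks ! 0")
  case True
  then show ?thesis
    using min_wdeg_eq_head[OF assms True] by (auto simp: min_def zmult_eq_neg1_iff)
next
  case False
  have "1 \<le> int (ns ! 0)"
    using assms by (elim valid_gradingE) simp
  then have "int (ns ! 0) * min 0 (ks ! 0) \<le> ks ! 0"
    using False mult_right_mono_neg[of 1 "int (ns ! 0)" "ks ! 0"] by simp
  then show ?thesis
    using False min_wdeg_le_head[OF assms] by linarith
qed

lemma strict_sorted_nonneg_last_le_1:
  fixes ks :: "int list"
  assumes "sorted_wrt (<) ks" and "ks \<noteq> []" and "0 \<le> ks ! 0" and "last ks \<le> 1"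
  shows "ks = [last ks] \<or> ks = [0, 1]"
proof -
  consider a where "ks = [a]" | a b where "ks = [a, b]" | a b c t where "ks = a # b # c # t"
    using assms(2) by (metis list.exhaust)
  then show ?thesis
  proof cases
    case (3 a b c t)
    then have "c \<le> last ks"
      using assms(1) by (intro sorted_le_last strict_sorted_imp_sorted) auto
    then show ?thesis
      using 3 assms by auto
  qed (use assms in auto)
qed

theorem lemma3p6:
  fixes ks :: "int list" and ns :: "nat list"
  assumes "valid_grading ks ns"
  shows "(has_depth (dimLam ks ns) 1 \<longleftrightarrow> ks ! 0 = -1 \<and> ns ! 0 = 1)
    \<and> (has_depth (dimLam ks ns) 1 \<longrightarrow> has_depth (dimW ks ns) (last ks + 1))
    \<and> (has_depth (dimLam ks ns) 0 \<longleftrightarrow> ks ! 0 \<ge> 0)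
    \<and> (has_depth (dimLam ks ns) 0 \<longrightarrow>
         (has_depth (dimW ks ns) 0 \<longleftrightarrow> ks = [0])
       \<and> (has_depth (dimW ks ns) 1 \<longleftrightarrow> ks = [0, 1] \<or> ks = [1]))"
proof -
  have "length ns = length ks" and "sorted_wrt (<) ks" and "ks \<noteq> []"
    using assms by (auto simp: valid_grading_def)
  note depth_Lam = has_depth_dimLam_iff[OF this(1)]
    and depth_W = has_depth_dimW_iff[OF assms]
  have shape: "ks = [last ks] \<or> ks = [0, 1]" if "0 \<le> ks ! 0" and "last ks \<le> 1"
    using strict_sorted_nonneg_last_le_1 \<open>sorted_wrt (<) ks\<close> \<open>ks \<noteq> []\<close> that by blast
  show ?thesis
    unfolding depth_Lam depth_W
    using min_wdeg_eq_0_iff[OF assms] min_wdeg_eq_neg1_iff[OF assms] shape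
    by auto
qed

end
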